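(* Let $\mathcal{H}$ be a real or complex Hilbert space, $\mathcal{F}$ a Hilbert space (with Euclidean norm $\|\cdot\|_{\mathcal{F}}$), $\Sigma\subset\mathcal{H}$ a model set which is either a union of subspaces (UoS) or a cone, and $f:\mathcal{H}\to\mathbb{R}\cup\{+\infty\}$ a regularizer with $f(x)<\infty$ for all $x\in\Sigma$. Let $M:\mathcal{H}\to\mathcal{F}$ be a continuous linear operator satisfying the RIP on $\Sigma-\Sigma$ with constant $\delta<\delta_\Sigma(f)$. Then for every $x_0\in\Sigma$, $x_0$ is the unique minimizer of $$\min_{x\in\mathcal{H}} f(x)\quad\text{subject to}\quad Mx=Mx_0 .$$
   Context: The inner product $\langle\cdot,\cdot\rangle$ on $\mathcal{H}$ is Hermitian, $\|x\|_{\mathcal{H}}^2=\langle x,x\rangle$, and $\mathcal{R}e$ denotes real part. $\Sigma$ is a UoS if $t z\in\Sigma$ for all $t\in\mathbb{R}$, $z\in\Sigma$; a cone if $tz\in\Sigma$ for all $t\ge 0$, $z\in\Sigma$. $\Sigma-\Sigma=\{x-x':x,x'\in\Sigma\}$. $M$ has the RIP on $\Sigma-\Sigma$ with constant $\delta$ if $(1-\delta)\|x\|_{\mathcal{H}}^2\le\|Mx\|_{\mathcal{F}}^2\le(1+\delta)\|x\|_{\mathcal{H}}^2$ for all $x\in\Sigma-\Sigma$. Atomic norm: for a set $\mathcal{A}\subset\mathcal{H}$, $\|x\|_{\mathcal{A}}=\inf\{t\ge0: x\in t\cdot\overline{\mathrm{conv}}(\mathcal{A})\}$ (closure in $\mathcal{H}$),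 with $\|x\|_{\mathcal{A}}=+\infty$ if no such $t$ exists. Set $\|\cdot\|_\Sigma:=\|\cdot\|_{\Sigma\cap S(1)}$ where $S(1)=\{x:\|x\|_{\mathcal{H}}=1\}$. Descent set: $\mathcal{T}_f(\Sigma)=\bigcup_{x\in\Sigma}\{z\in\mathcal{H}: f(x+z)\le f(x)\}$. Admissible constant: $\delta_\Sigma(f):=\inf_{z\in\mathcal{T}_f(\Sigma)\setminus\{0\}}\ \sup_{x\in\Sigma\setminus\{0\}}\delta_\Sigma(x,z)$, where, if $\Sigma$ is a UoS, $$\delta_\Sigma(x,z)=\frac{-\mathcal{R}e\langle x,z\rangle}{\|x\|_{\mathcal{H}}\sqrt{\|x+z\|_\Sigma^2-\|x\|_{\mathcal{H}}^2-2\mathcal{R}e\langle x,z\rangle}},$$ and, if $\Sigma$ is a cone (not a UoS), $$\delta_\Sigma(x,z)=\frac{-2\mathcal{R}e\langle x,z\rangle}{\|x+z\|_\Sigma^2-2\mathcal{R}e\langle x,z\rangle}.$$ (If $\|x+z\|_\Sigma=+\infty$ the quotient is read as $0$.) *)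

theory Defs
  imports "HOL-Analysis.Analysis"
begin

text \<open>Model sets. A union of subspaces (UoS) is closed under all real scalings;
  a cone (library notion \<open>cone\<close>) is closed under nonnegative scalings.\<close>
definition is_UoS :: "'a::real_vector set \<Rightarrow> bool" where
  "is_UoS \<Sigma> \<longleftrightarrow> (\<forall>t::real. \<forall>z\<in>\<Sigma>. t *\<^sub>R z \<in> \<Sigma>)"

definition diff_set :: "'a::ab_group_add set \<Rightarrow> 'a set" where
  "diff_set \<Sigma> = {x - x' | x x'. x \<in> \<Sigma> \<and> x' \<in> \<Sigma>}"

definition RIP :: "('a::real_normed_vector \<Rightarrow> 'b::real_normed_vector) \<Rightarrow> 'a set \<Rightarrow> real \<Rightarrow> bool" where
  "RIP M S \<delta> \<longleftrightarrow> (\<forall>x\<in>S. (1 - \<delta>) * (norm x)\<^sup>2 \<le> (norm (M x))\<^sup>2 \<and>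
                            (norm (M x))\<^sup>2 \<le> (1 + \<delta>) * (norm x)\<^sup>2)"

definition atomic_norm :: "'a::real_normed_vector set \<Rightarrow> 'a \<Rightarrow> ereal" where
  "atomic_norm A x = Inf {ereal t | t. t \<ge> 0 \<and> x \<in> (\<lambda>v. t *\<^sub>R v) ` closure (convex hull A)}"

definition sigma_norm :: "'a::real_normed_vector set \<Rightarrow> 'a \<Rightarrow> ereal" where
  "sigma_norm \<Sigma> x = atomic_norm (\<Sigma> \<inter> {y. norm y = 1}) x"

definition descent_set :: "('a::real_vector \<Rightarrow> ereal) \<Rightarrow> 'a set \<Rightarrow> 'a set" where
  "descent_set f \<Sigma> = (\<Union>x\<in>\<Sigma>. {z. f (x + z) \<le> f x})"

definition delta_pair :: "'a::real_inner set \<Rightarrow> 'a \<Rightarrow> 'a \<Rightarrow> real" where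
  "delta_pair \<Sigma> x z =
     (if sigma_norm \<Sigma> (x + z) = \<infinity> then 0
      else (let N = real_of_ereal (sigma_norm \<Sigma> (x + z)) in
        if is_UoS \<Sigma> then
          - (x \<bullet> z) / (norm x * sqrt (N\<^sup>2 - (norm x)\<^sup>2 - 2 * (x \<bullet> z)))
        else
          - 2 * (x \<bullet> z) / (N\<^sup>2 - 2 * (x \<bullet> z))))"

definition admissible_const :: "'a::real_inner set \<Rightarrow> ('a \<Rightarrow> ereal) \<Rightarrow> ereal" where
  "admissible_const \<Sigma> f =
     (INF z\<in>descent_set f \<Sigma> - {0}. SUP x\<in>\<Sigma> - {0}. ereal (delta_pair \<Sigma> x z))"

end

theory Submission
  imports Defs
begin

text \<open>Let \<open>z \<noteq> 0\<close> be in the kernel of \<open>M\<close> and \<open>x \<in> \<Sigma>\<close>, and write \<open>x + z = t c\<close> with \<open>c\<close> in the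
  closed convex hull of the unit atoms of \<open>\<Sigma>\<close>. For every atom \<open>u\<close>, applying the two RIP bounds to
  the differences \<open>(1 \<pm> s) x - t u \<in> \<Sigma> - \<Sigma>\<close> and adding them cancels \<open>\<parallel>M u\<parallel>\<^sup>2\<close>, leaving an
  inequality that is affine in \<open>u\<close>; it therefore persists for \<open>u = c\<close>, where \<open>M z = 0\<close> evaluates it.
  Letting \<open>t\<close> tend to \<open>\<parallel>x + z\<parallel>\<^sub>\<Sigma>\<close> and choosing \<open>s\<close> well gives \<open>\<delta>\<^sub>\<Sigma>(x, z) \<le> \<delta>\<close>. Hence no nonzero
  kernel vector is a descent direction when \<open>\<delta> < \<delta>\<^sub>\<Sigma>(f)\<close>, which is exact recovery.\<close>

lemma closure_convex_hull_subset_halfspace: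
  fixes l :: "'a::real_normed_vector \<Rightarrow> real"
  assumes "bounded_linear l" and "A \<subseteq> {u. l u \<le> b}"
  shows "closure (convex hull A) \<subseteq> {u. l u \<le> b}"
proof -
  have "convex {u. l u \<le> b}"
    using convex_linear_vimage[OF bounded_linear.linear[OF assms(1)] convex_halfspace_le[of 1 b]]
    by (simp add: vimage_def)
  moreover have "closed {u. l u \<le> b}"
    using linear_continuous_on[OF assms(1)] by (intro closed_Collect_le continuous_on_const)
  ultimately show ?thesis
    using assms(2) by (meson closure_minimal hull_minimal)
qed

lemma is_UoS_imp_cone: "is_UoS \<Sigma> \<Longrightarrow> cone \<Sigma>"
  unfolding is_UoS_def cone_def by blast

lemma RIP_const_nonneg:
  assumes "RIP M (diff_set \<Sigma>) \<delta>" and "cone \<Sigma>" and "x \<in> \<Sigma>" and "x \<noteq> 0"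
  shows "0 \<le> \<delta>"
proof -
  have "0 \<in> \<Sigma>" using assms(2,3) cone_contains_0 by blast
  then have "x - 0 \<in> diff_set \<Sigma>" using assms(3) unfolding diff_set_def by blast
  then have "(1 - \<delta>) * (norm x)\<^sup>2 \<le> (1 + \<delta>) * (norm x)\<^sup>2"
    using assms(1) unfolding RIP_def by fastforce
  then show ?thesis using assms(4) by (simp add: mult_le_cancel_right)
qed

lemma RIP_atom_inequality:
  fixes M :: "'a::real_inner \<Rightarrow> 'b::real_inner"
  assumes "bounded_linear M" and "RIP M (diff_set \<Sigma>) \<delta>"
    and "(1 + s) *\<^sub>R x \<in> \<Sigma>" and "(1 - s) *\<^sub>R x \<in> \<Sigma>" and "t *\<^sub>R u \<in> \<Sigma>" and "norm u = 1"
  shows "2 * t * ((\<delta> - s) * (x \<bullet> u) + s * (M x \<bullet> M u))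
           \<le> \<delta> * (t\<^sup>2 + (1 + s\<^sup>2) * (x \<bullet> x)) + 2 * s * (M x \<bullet> M x - x \<bullet> x)"
proof -
  interpret bounded_linear M by fact
  have in_diff: "p *\<^sub>R x - t *\<^sub>R u \<in> diff_set \<Sigma>" if "p *\<^sub>R x \<in> \<Sigma>" for p
    using that assms(5) unfolding diff_set_def by blast
  have lower: "(1 - \<delta>) * (norm ((1 + s) *\<^sub>R x - t *\<^sub>R u))\<^sup>2 \<le> (norm (M ((1 + s) *\<^sub>R x - t *\<^sub>R u)))\<^sup>2"
    using assms(2) in_diff[OF assms(3)] unfolding RIP_def by blast
  have upper: "(norm (M ((1 - s) *\<^sub>R x - t *\<^sub>R u)))\<^sup>2 \<le> (1 + \<delta>) * (norm ((1 - s) *\<^sub>R x - t *\<^sub>R u))\<^sup>2"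
    using assms(2) in_diff[OF assms(4)] unfolding RIP_def by blast
  have uu: "u \<bullet> u = 1" using assms(6) by (simp add: power2_norm_eq_inner[symmetric])
  have norm_diff: "(norm (p *\<^sub>R x - t *\<^sub>R u))\<^sup>2 = p\<^sup>2 * (x \<bullet> x) - 2 * p * t * (x \<bullet> u) + t\<^sup>2" for p
    unfolding power2_norm_eq_inner
    by (simp add: inner_diff_left inner_diff_right uu inner_commute[of u x] power2_eq_square algebra_simps)
  have norm_M_diff: "(norm (M (p *\<^sub>R x - t *\<^sub>R u)))\<^sup>2
      = p\<^sup>2 * (M x \<bullet> M x) - 2 * p * t * (M x \<bullet> M u) + t\<^sup>2 * (M u \<bullet> M u)" for p
    unfolding power2_norm_eq_inner
    by (simp add: diff scaleR inner_diff_left inner_diff_right inner_commute[of "M u" "M x"]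
        power2_eq_square algebra_simps)
  \<comment> \<open>adding \<open>lower\<close> and \<open>upper\<close> cancels the term \<open>t\<^sup>2 \<parallel>M u\<parallel>\<^sup>2\<close>\<close>
  show ?thesis
    using add_mono[OF lower upper] unfolding norm_diff norm_M_diff
    by (simp add: power2_eq_square algebra_simps)
qed

lemma RIP_closed_hull_inequality:
  fixes M :: "'a::real_inner \<Rightarrow> 'b::real_inner"
  assumes "bounded_linear M" and "RIP M (diff_set \<Sigma>) \<delta>" and "cone \<Sigma>"
    and "(1 + s) *\<^sub>R x \<in> \<Sigma>" and "(1 - s) *\<^sub>R x \<in> \<Sigma>" and "t \<ge> 0"
    and "c \<in> closure (convex hull (\<Sigma> \<inter> {y. norm y = 1}))"
  shows "2 * t * ((\<delta> - s) * (x \<bullet> c) + s * (M x \<bullet> M c))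
           \<le> \<delta> * (t\<^sup>2 + (1 + s\<^sup>2) * (x \<bullet> x)) + 2 * s * (M x \<bullet> M x - x \<bullet> x)"
proof -
  define l where "l u = 2 * t * ((\<delta> - s) * (x \<bullet> u) + s * (M x \<bullet> M u))" for u
  have "bounded_linear l"
    unfolding l_def
    by (intro bounded_linear_const_mult bounded_linear_add bounded_linear_inner_right
        bounded_linear_compose[OF bounded_linear_inner_right assms(1)])
  moreover have "\<Sigma> \<inter> {y. norm y = 1}
      \<subseteq> {u. l u \<le> \<delta> * (t\<^sup>2 + (1 + s\<^sup>2) * (x \<bullet> x)) + 2 * s * (M x \<bullet> M x - x \<bullet> x)}"
    using RIP_atom_inequality[OF assms(1,2,4,5)] assms(3,6) unfolding l_def cone_def by blast
  ultimately show ?thesis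
    using closure_convex_hull_subset_halfspace assms(7) unfolding l_def by blast
qed

definition atom_scales :: "'a::real_normed_vector set \<Rightarrow> 'a \<Rightarrow> real set" where
  "atom_scales \<Sigma> w =
     {t. t \<ge> 0 \<and> w \<in> (\<lambda>v. t *\<^sub>R v) ` closure (convex hull (\<Sigma> \<inter> {y. norm y = 1}))}"

lemma sigma_norm_eq_Inf_atom_scales: "sigma_norm \<Sigma> w = Inf (ereal ` atom_scales \<Sigma> w)"
  unfolding sigma_norm_def atomic_norm_def atom_scales_def by (rule arg_cong[where f = Inf]) auto

lemma sigma_norm_infinite: "atom_scales \<Sigma> w = {} \<Longrightarrow> sigma_norm \<Sigma> w = \<infinity>"
  by (simp add: sigma_norm_eq_Inf_atom_scales top_ereal_def)

lemma sigma_norm_finite: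
  assumes "atom_scales \<Sigma> w \<noteq> {}"
  shows "sigma_norm \<Sigma> w = ereal (Inf (atom_scales \<Sigma> w))"
proof -
  have "bdd_below (atom_scales \<Sigma> w)"
    unfolding atom_scales_def by (rule bdd_belowI[of _ 0]) auto
  then show ?thesis
    using ereal_Inf'[OF _ assms] by (simp add: sigma_norm_eq_Inf_atom_scales)
qed

lemma norm_le_Inf_atom_scales:
  assumes "atom_scales \<Sigma> w \<noteq> {}"
  shows "norm w \<le> Inf (atom_scales \<Sigma> w)"
proof (rule cInf_greatest[OF assms])
  fix t assume "t \<in> atom_scales \<Sigma> w"
  then obtain c where "t \<ge> 0" and c: "c \<in> closure (convex hull (\<Sigma> \<inter> {y. norm y = 1}))"
    and "w = t *\<^sub>R c"
    unfolding atom_scales_def by auto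
  have "closure (convex hull (\<Sigma> \<inter> {y. norm y = 1})) \<subseteq> cball 0 1"
    by (intro closure_minimal hull_minimal) auto
  then have "norm c \<le> 1" using c by auto
  then show "norm w \<le> t" using \<open>t \<ge> 0\<close> \<open>w = t *\<^sub>R c\<close> by (simp add: mult_left_le)
qed

lemma kernel_atom_scale_inequality:
  fixes M :: "'a::real_inner \<Rightarrow> 'b::real_inner"
  assumes "bounded_linear M" and "RIP M (diff_set \<Sigma>) \<delta>" and "cone \<Sigma>" and "M z = 0"
    and "(1 + s) *\<^sub>R x \<in> \<Sigma>" and "(1 - s) *\<^sub>R x \<in> \<Sigma>" and "t \<in> atom_scales \<Sigma> (x + z)"
  shows "0 \<le> \<delta> * (t\<^sup>2 - (norm x)\<^sup>2 - 2 * (x \<bullet> z) + s\<^sup>2 * (norm x)\<^sup>2) + 2 * s * (x \<bullet> z)"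
proof -
  interpret bounded_linear M by fact
  obtain c where "t \<ge> 0" and c: "c \<in> closure (convex hull (\<Sigma> \<inter> {y. norm y = 1}))"
    and xz: "x + z = t *\<^sub>R c"
    using assms(7) unfolding atom_scales_def by auto
  have "t * (x \<bullet> c) = x \<bullet> x + x \<bullet> z"
    using arg_cong[OF xz, of "inner x"] by (simp add: inner_add_right)
  moreover have "t * (M x \<bullet> M c) = M x \<bullet> M x"
    using arg_cong[OF xz, of "\<lambda>v. M x \<bullet> M v"] assms(4) by (simp add: add scaleR)
  moreover have "2 * ((\<delta> - s) * (t * (x \<bullet> c)) + s * (t * (M x \<bullet> M c)))
      \<le> \<delta> * (t\<^sup>2 + (1 + s\<^sup>2) * (x \<bullet> x)) + 2 * s * (M x \<bullet> M x - x \<bullet> x)"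
    using RIP_closed_hull_inequality[OF assms(1-3,5,6) \<open>t \<ge> 0\<close> c] by (simp add: algebra_simps)
  ultimately show ?thesis
    by (simp add: power2_norm_eq_inner algebra_simps)
qed

lemma kernel_sigma_norm_inequality:
  fixes M :: "'a::real_inner \<Rightarrow> 'b::real_inner"
  assumes "bounded_linear M" and "RIP M (diff_set \<Sigma>) \<delta>" and "cone \<Sigma>" and "M z = 0"
    and "(1 + s) *\<^sub>R x \<in> \<Sigma>" and "(1 - s) *\<^sub>R x \<in> \<Sigma>" and "atom_scales \<Sigma> (x + z) \<noteq> {}"
  shows "0 \<le> \<delta> * ((Inf (atom_scales \<Sigma> (x + z)))\<^sup>2 - (norm x)\<^sup>2 - 2 * (x \<bullet> z) + s\<^sup>2 * (norm x)\<^sup>2)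
             + 2 * s * (x \<bullet> z)"
proof -
  let ?T = "atom_scales \<Sigma> (x + z)"
  let ?K = "{t. 0 \<le> \<delta> * (t\<^sup>2 - (norm x)\<^sup>2 - 2 * (x \<bullet> z) + s\<^sup>2 * (norm x)\<^sup>2) + 2 * s * (x \<bullet> z)}"
  have "closure ?T \<subseteq> ?K"
    using kernel_atom_scale_inequality[OF assms(1-6)]
    by (intro closure_minimal) (auto intro!: closed_Collect_le continuous_intros)
  moreover have "bdd_below ?T" unfolding atom_scales_def by (rule bdd_belowI[of _ 0]) auto
  then have "Inf ?T \<in> closure ?T" using closure_contains_Inf assms(7) by blast
  ultimately show ?thesis by blast
qed

lemma UoS_quotient_bound:
  fixes nx R a \<delta> :: real
  assumes "nx > 0" and "R > 0"
    and "0 \<le> \<delta> * (R + (sqrt R / nx)\<^sup>2 * nx\<^sup>2) + 2 * (sqrt R / nx) * a"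
  shows "- a / (nx * sqrt R) \<le> \<delta>"
proof -
  have "(sqrt R / nx)\<^sup>2 * nx\<^sup>2 = R" using assms(1,2) by (simp add: power_divide)
  then have "0 \<le> (nx / (2 * sqrt R)) * (\<delta> * (2 * R) + 2 * (sqrt R / nx) * a)"
    using assms by simp
  also have "\<dots> = \<delta> * (nx * sqrt R) + a"
    using assms(1,2) by (simp add: field_simps power2_eq_square)
  finally have "- a \<le> \<delta> * (nx * sqrt R)" by simp
  moreover have "nx * sqrt R > 0" using assms(1,2) by simp
  ultimately show ?thesis
    using pos_divide_le_eq[of "nx * sqrt R" "- a" \<delta>] by (simp add: mult.commute)
qed

lemma delta_pair_le_of_quadratic_bound:
  fixes \<Sigma> :: "'a::real_inner set" and x z :: 'a and N \<delta> :: real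
  defines "R \<equiv> N\<^sup>2 - (norm x)\<^sup>2 - 2 * (x \<bullet> z)"
  assumes "cone \<Sigma>" and x: "x \<in> \<Sigma>" "x \<noteq> 0" and sn: "sigma_norm \<Sigma> (x + z) = ereal N"
    and "R > 0"
    and bound: "\<And>s. (1 + s) *\<^sub>R x \<in> \<Sigma> \<Longrightarrow> (1 - s) *\<^sub>R x \<in> \<Sigma> \<Longrightarrow>
                  0 \<le> \<delta> * (R + s\<^sup>2 * (norm x)\<^sup>2) + 2 * s * (x \<bullet> z)"
  shows "delta_pair \<Sigma> x z \<le> \<delta>"
proof (cases "is_UoS \<Sigma>")
  case True
  have "delta_pair \<Sigma> x z = - (x \<bullet> z) / (norm x * sqrt R)"
    using sn True unfolding delta_pair_def R_def by (simp add: Let_def)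
  also have "\<dots> \<le> \<delta>"
    using bound[of "sqrt R / norm x"] True x \<open>R > 0\<close>
    by (intro UoS_quotient_bound) (auto simp: is_UoS_def mult.assoc)
  finally show ?thesis .
next
  case False
  have "(1 + 1) *\<^sub>R x \<in> \<Sigma>" and "(1 - 1) *\<^sub>R x \<in> \<Sigma>"
    using \<open>cone \<Sigma>\<close> x(1) cone_contains_0 unfolding cone_def by auto
  then have "- 2 * (x \<bullet> z) \<le> \<delta> * (N\<^sup>2 - 2 * (x \<bullet> z))"
    using bound[of 1] unfolding R_def by simp
  moreover have "N\<^sup>2 - 2 * (x \<bullet> z) > 0"
    using \<open>R > 0\<close> unfolding R_def by (smt (verit) zero_le_power2)
  ultimately have "- 2 * (x \<bullet> z) / (N\<^sup>2 - 2 * (x \<bullet> z)) \<le> \<delta>"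
    by (metis pos_divide_le_eq mult.commute)
  then show ?thesis
    using sn False unfolding delta_pair_def by (simp add: Let_def)
qed

lemma delta_pair_kernel_le:
  fixes \<Sigma> :: "'a::real_inner set" and M :: "'a \<Rightarrow> 'b::real_inner"
  assumes model: "is_UoS \<Sigma> \<or> cone \<Sigma>" and "bounded_linear M" and "RIP M (diff_set \<Sigma>) \<delta>"
    and x: "x \<in> \<Sigma>" "x \<noteq> 0" and z: "z \<noteq> 0" "M z = 0"
  shows "delta_pair \<Sigma> x z \<le> \<delta>"
proof -
  have cone: "cone \<Sigma>" using model is_UoS_imp_cone by blast
  let ?T = "atom_scales \<Sigma> (x + z)"
  show ?thesis
  proof (cases "?T = {}")
    case True
    then show ?thesis
      using RIP_const_nonneg[OF assms(3) cone x] sigma_norm_infinite[OF True]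
      unfolding delta_pair_def by simp
  next
    case False
    define N where "N = Inf ?T"
    have "(norm (x + z))\<^sup>2 \<le> N\<^sup>2"
      using norm_le_Inf_atom_scales[OF False] unfolding N_def by (simp add: power_mono)
    moreover have "(norm (x + z))\<^sup>2 = (norm x)\<^sup>2 + 2 * (x \<bullet> z) + (norm z)\<^sup>2"
      using dot_norm[of x z] by simp
    moreover have "(norm z)\<^sup>2 > 0" using z(1) by simp
    ultimately have "N\<^sup>2 - (norm x)\<^sup>2 - 2 * (x \<bullet> z) > 0" by linarith
    moreover have "sigma_norm \<Sigma> (x + z) = ereal N"
      using sigma_norm_finite[OF False] unfolding N_def .
    ultimately show ?thesis
      using kernel_sigma_norm_inequality[OF assms(2,3) cone z(2) _ _ False]
      by (intro delta_pair_le_of_quadratic_bound[OF cone x]) (auto simp: N_def algebra_simps)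
  qed
qed

lemma admissible_const_le:
  assumes "z \<in> descent_set f \<Sigma>" and "z \<noteq> 0" and "\<And>x. x \<in> \<Sigma> - {0} \<Longrightarrow> delta_pair \<Sigma> x z \<le> \<delta>"
  shows "admissible_const \<Sigma> f \<le> ereal \<delta>"
proof -
  have "admissible_const \<Sigma> f \<le> (SUP x\<in>\<Sigma> - {0}. ereal (delta_pair \<Sigma> x z))"
    unfolding admissible_const_def using assms(1,2) by (intro INF_lower) simp
  also have "\<dots> \<le> ereal \<delta>" using assms(3) by (intro SUP_least) simp
  finally show ?thesis .
qed

theorem theorem1:
  fixes \<Sigma> :: "'a::{real_inner, complete_space} set"
    and f :: "'a \<Rightarrow> ereal"
    and M :: "'a \<Rightarrow> 'b::{real_inner, complete_space}"
    and \<delta> :: real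
  assumes model: "is_UoS \<Sigma> \<or> cone \<Sigma>"
    and f_range: "\<forall>x. f x \<noteq> -\<infinity>"
    and f_fin: "\<forall>x\<in>\<Sigma>. f x < \<infinity>"
    and M_lin: "bounded_linear M"
    and rip: "RIP M (diff_set \<Sigma>) \<delta>"
    and small: "ereal \<delta> < admissible_const \<Sigma> f"
  shows "\<forall>x0\<in>\<Sigma>. (\<forall>x. M x = M x0 \<longrightarrow> f x0 \<le> f x) \<and>
                  (\<forall>x. M x = M x0 \<and> x \<noteq> x0 \<longrightarrow> f x0 < f x)"
proof (intro ballI)
  fix x0 assume x0: "x0 \<in> \<Sigma>"
  have "f x0 < f x" if "M x = M x0" and "x \<noteq> x0" for x
  proof (rule ccontr)
    assume "\<not> f x0 < f x"
    then have "x - x0 \<in> descent_set f \<Sigma>"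
      using x0 unfolding descent_set_def by force
    moreover have "M (x - x0) = 0"
      using that(1) linear_diff[OF bounded_linear.linear[OF M_lin]] by simp
    ultimately have "admissible_const \<Sigma> f \<le> ereal \<delta>"
      using that(2) delta_pair_kernel_le[OF model M_lin rip]
      by (intro admissible_const_le) auto
    then show False using small by simp
  qed
  then show "(\<forall>x. M x = M x0 \<longrightarrow> f x0 \<le> f x) \<and> (\<forall>x. M x = M x0 \<and> x \<noteq> x0 \<longrightarrow> f x0 < f x)"
    by (metis order_refl less_imp_le)
qed

end
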